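(* Let $n\ge2$, $1\le r\le n-1$ and $\alpha,\beta\in\mathbb{Z}_2^n$. Then $\mathrm{adp}^{\mathrm{XR}}_r(\alpha,\beta\to0)=\mathrm{adp}^{\oplus}(\alpha,\beta\to0)$.
   Context: For $x\in\mathbb{Z}_2^n$, $x=(x_0,\dots,x_{n-1})$ is identified with the integer $\sum_i x_i2^{n-1-i}$; $+$ is addition modulo $2^n$, $\oplus$ is bitwise XOR, $x\lll r=(x_r,\dots,x_{n-1},x_0,\dots,x_{r-1})$. For $f:(\mathbb{Z}_2^n)^2\to\mathbb{Z}_2^n$, $\mathrm{adp}^f(\alpha,\beta\to\gamma)=4^{-n}\#\{(x,y): f(x+\alpha,y+\beta)=f(x,y)+\gamma\}$. $\mathrm{adp}^{\oplus}$ is this for $f(x,y)=x\oplus y$, and $\mathrm{adp}^{\mathrm{XR}}_r$ for $f(x,y)=(x\oplus y)\lll r$. *)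

theory Defs
  imports Main "HOL.Real"
begin

text \<open>Elements of Z_2^n are identified with integers in {0..<2^n}
  (x = (x_0,...,x_{n-1}) corresponds to sum x_i 2^(n-1-i)).\<close>

definition words :: "nat \<Rightarrow> nat set" where
  "words n = {0..<2^n}"

definition addm :: "nat \<Rightarrow> nat \<Rightarrow> nat \<Rightarrow> nat" where
  "addm n x y = (x + y) mod 2^n"

text \<open>Cyclic left rotation by r of an n-bit word:
  (x_0,...,x_{n-1}) to (x_r,...,x_{n-1},x_0,...,x_{r-1}).\<close>
definition rotl :: "nat \<Rightarrow> nat \<Rightarrow> nat \<Rightarrow> nat" where
  "rotl n r x = (x * 2^r) mod 2^n + x div 2^(n - r)"

definition adp :: "nat \<Rightarrow> (nat \<Rightarrow> nat \<Rightarrow> nat) \<Rightarrow> nat \<Rightarrow> nat \<Rightarrow> nat \<Rightarrow> real" where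
  "adp n f a b g = real (card {(x, y). x \<in> words n \<and> y \<in> words n \<and>
       f (addm n x a) (addm n y b) = addm n (f x y) g}) / 4 ^ n"

definition adp_xor :: "nat \<Rightarrow> nat \<Rightarrow> nat \<Rightarrow> nat \<Rightarrow> real" where
  "adp_xor n a b g = adp n (\<lambda>x y. xor x y) a b g"

definition adp_XR :: "nat \<Rightarrow> nat \<Rightarrow> nat \<Rightarrow> nat \<Rightarrow> nat \<Rightarrow> real" where
  "adp_XR n r a b g = adp n (\<lambda>x y. rotl n r (xor x y)) a b g"

end

theory Submission
  imports Defs
begin

text \<open>For \<open>\<gamma> = 0\<close> the output condition \<open>f(x + \<alpha>, y + \<beta>) = f(x, y)\<close> is unchanged when
  \<open>f\<close> is post-composed with a map that is injective on n-bit words. Rotation is such a map,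
  being a permutation of the bit positions, so the rotation in XR is invisible to
  differentials with zero output difference.\<close>

lemma xor_less_exp:
  fixes x y :: nat
  assumes "x < 2 ^ n" "y < 2 ^ n"
  shows "xor x y < 2 ^ n"
proof -
  have "xor x y = take_bit n (xor x y)"
    using assms by (simp add: take_bit_xor take_bit_nat_eq_self)
  also have "\<dots> < 2 ^ n" by (rule take_bit_nat_less_exp)
  finally show ?thesis .
qed

lemma addm_in_words: "addm n x y \<in> words n"
  by (simp add: addm_def words_def)

lemma addm_zero: "x \<in> words n \<Longrightarrow> addm n x 0 = x"
  by (simp add: addm_def words_def)

lemma rotl_eq_concat:
  fixes z :: nat
  assumes "z < 2 ^ n" "r \<le> n"
  shows "rotl n r z = (z mod 2 ^ (n - r)) * 2 ^ r + z div 2 ^ (n - r)"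
proof -
  define d :: nat where "d = 2 ^ (n - r)"
  have exp_n: "(2::nat) ^ n = d * 2 ^ r"
    using assms(2) by (simp add: d_def flip: power_add)
  have "z * 2 ^ r = (z div d * d + z mod d) * 2 ^ r"
    by (simp only: div_mult_mod_eq)
  also have "\<dots> = (z div d) * 2 ^ n + (z mod d) * 2 ^ r"
    by (simp only: exp_n distrib_right mult.assoc)
  finally have "z * 2 ^ r = (z div d) * 2 ^ n + (z mod d) * 2 ^ r" .
  moreover have "(z mod d) * 2 ^ r < 2 ^ n"
    using exp_n by (simp add: d_def)
  ultimately have "(z * 2 ^ r) mod 2 ^ n = (z mod d) * 2 ^ r"
    by simp
  then show ?thesis
    by (simp add: rotl_def d_def)
qed

lemma rotl_mod_div:
  fixes z :: nat
  assumes "z < 2 ^ n" "r \<le> n"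
  shows "rotl n r z mod 2 ^ r = z div 2 ^ (n - r)"
    and "rotl n r z div 2 ^ r = z mod 2 ^ (n - r)"
proof -
  have "z div 2 ^ (n - r) < 2 ^ r"
    using assms by (simp add: div_less_iff_less_mult flip: power_add)
  then show "rotl n r z mod 2 ^ r = z div 2 ^ (n - r)"
    and "rotl n r z div 2 ^ r = z mod 2 ^ (n - r)"
    using rotl_eq_concat[OF assms] by simp_all
qed

lemma rotl_in_words:
  assumes "z \<in> words n" "r \<le> n"
  shows "rotl n r z \<in> words n"
proof -
  have z: "z < 2 ^ n" using assms(1) by (simp add: words_def)
  have "rotl n r z = 2 ^ r * (rotl n r z div 2 ^ r) + rotl n r z mod 2 ^ r"
    by simp
  also have "\<dots> < 2 ^ r * (z mod 2 ^ (n - r) + 1)"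
    using z assms(2) by (simp add: rotl_mod_div div_less_iff_less_mult flip: power_add)
  also have "\<dots> \<le> 2 ^ r * 2 ^ (n - r)"
    by (intro mult_left_mono) (simp_all add: Suc_le_eq)
  also have "\<dots> = 2 ^ n"
    using assms(2) by (simp flip: power_add)
  finally show ?thesis by (simp add: words_def)
qed

lemma inj_on_rotl: "r \<le> n \<Longrightarrow> inj_on (rotl n r) (words n)"
  by (rule inj_onI) (metis div_mult_mod_eq rotl_mod_div words_def atLeastLessThan_iff)

lemma adp_zero_comp_inj_on:
  assumes "inj_on h (words n)" "h ` words n \<subseteq> words n"
    and "\<And>x y. x \<in> words n \<Longrightarrow> y \<in> words n \<Longrightarrow> f x y \<in> words n"
  shows "adp n (\<lambda>x y. h (f x y)) \<alpha> \<beta> 0 = adp n f \<alpha> \<beta> 0"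
proof -
  have "h (f (addm n x \<alpha>) (addm n y \<beta>)) = addm n (h (f x y)) 0
      \<longleftrightarrow> f (addm n x \<alpha>) (addm n y \<beta>) = addm n (f x y) 0"
    if "x \<in> words n" "y \<in> words n" for x y
    using that assms addm_in_words inj_on_eq_iff[OF assms(1)]
    by (simp add: addm_zero image_subset_iff)
  then show ?thesis
    unfolding adp_def by (intro arg_cong[where f = "\<lambda>S. real (card S) / 4 ^ n"]) auto
qed

theorem proposition1:
  fixes n r \<alpha> \<beta> :: nat
  assumes "n \<ge> 2" and "1 \<le> r" and "r \<le> n - 1"
    and "\<alpha> \<in> words n" and "\<beta> \<in> words n"
  shows "adp_XR n r \<alpha> \<beta> 0 = adp_xor n \<alpha> \<beta> 0"
proof -
  have "r \<le> n" using assms(3) by simp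
  moreover have "xor x y \<in> words n" if "x \<in> words n" "y \<in> words n" for x y :: nat
    using that xor_less_exp by (simp add: words_def)
  ultimately show ?thesis
    unfolding adp_XR_def adp_xor_def
    by (intro adp_zero_comp_inj_on inj_on_rotl) (auto intro: rotl_in_words)
qed

end
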